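(* Let $n\in\mathbb{N}$, $0\le\alpha\le1$, and let $S\subseteq\mathbb{F}_2^n$ with $|S|\ge\alpha 2^n$. Then there exists $a\in\mathbb{F}_2^n$ such that the translate $S+\{a\}=\{x+a:x\in S\}$ contains a chain $C$ (with respect to the partial order $\le$ below) with $|C|\ge\alpha n$.
   Context: The partial order $\le$ on $\mathbb{F}_2^n$ is coordinatewise: $x\le y$ iff $x_i\le y_i$ (viewing $0<1$) for every coordinate $i$. A chain is a set of pairwise comparable elements. Addition is in $\mathbb{F}_2^n$. *)

theory Defs
  imports Complex_Main
begin

text \<open>Elements of F_2^n are represented as boolean lists of length n
  (False = 0, True = 1).\<close>

definition F2n :: "nat \<Rightarrow> bool list set" where
  "F2n n = {x. length x = n}"

definition vle :: "bool list \<Rightarrow> bool list \<Rightarrow> bool" where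
  "vle x y \<longleftrightarrow> length x = length y \<and> (\<forall>i < length x. x ! i \<longrightarrow> y ! i)"

definition vadd :: "bool list \<Rightarrow> bool list \<Rightarrow> bool list" where
  "vadd x y = map2 (\<lambda>a b. a \<noteq> b) x y"

definition translate :: "bool list set \<Rightarrow> bool list \<Rightarrow> bool list set" where
  "translate S a = (\<lambda>x. vadd x a) ` S"

definition is_chain :: "bool list set \<Rightarrow> bool" where
  "is_chain C \<longleftrightarrow> (\<forall>x\<in>C. \<forall>y\<in>C. vle x y \<or> vle y x)"

end

theory Submission
  imports Defs
begin

text \<open>Fix the maximal chain \<open>M\<close> of ``staircase'' vectors \<open>1\<^sup>k0\<^sup>n\<^sup>-\<^sup>k\<close>, \<open>0 \<le> k \<le> n\<close>,
  which has \<open>n + 1\<close> elements. Each \<open>y \<in> M\<close> lies in exactly \<open>|S|\<close> of the \<open>2\<^sup>n\<close> translates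
  \<open>S + a\<close>. Double counting shows that \<open>|M \<inter> (S + a)|\<close> has average
  \<open>(n + 1) |S| / 2\<^sup>n \<ge> \<alpha> (n + 1)\<close> over \<open>a\<close>, so some translate meets the chain \<open>M\<close>
  in at least \<open>\<alpha> n\<close> points.\<close>

lemma ex_ge_average:
  fixes f :: "'a \<Rightarrow> 'b::linordered_semidom"
  assumes "finite A" "A \<noteq> {}"
  shows "\<exists>a\<in>A. sum f A \<le> of_nat (card A) * f a"
proof (rule ccontr)
  assume "\<not> ?thesis"
  then have "(\<Sum>a\<in>A. of_nat (card A) * f a) < (\<Sum>a\<in>A. sum f A)"
    using assms by (intro sum_strict_mono) auto
  then show False
    by (simp add: sum_distrib_left)
qed

lemma length_vadd [simp]: "length (vadd x y) = min (length x) (length y)"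
  by (simp add: vadd_def)

lemma nth_vadd [simp]:
  "i < length x \<Longrightarrow> i < length y \<Longrightarrow> vadd x y ! i = (x ! i \<noteq> y ! i)"
  by (simp add: vadd_def)

lemma vadd_vadd_cancel_left: "length x = length y \<Longrightarrow> vadd x (vadd x y) = y"
  by (rule nth_equalityI) auto

lemma vadd_vadd_cancel_right: "length x = length y \<Longrightarrow> vadd (vadd x y) y = x"
  by (rule nth_equalityI) auto

lemma finite_F2n: "finite (F2n n)"
  using finite_lists_length_eq[of "UNIV :: bool set" n] by (simp add: F2n_def)

lemma card_F2n: "card (F2n n) = 2 ^ n"
  using card_lists_length_eq[of "UNIV :: bool set" n] by (simp add: F2n_def)

lemma translate_subset_F2n:
  "S \<subseteq> F2n n \<Longrightarrow> a \<in> F2n n \<Longrightarrow> translate S a \<subseteq> F2n n"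
  by (auto simp: translate_def F2n_def)

lemma card_translate:
  assumes "S \<subseteq> F2n n" "a \<in> F2n n"
  shows "card (translate S a) = card S"
proof -
  have "inj_on (\<lambda>x. vadd x a) S"
  proof (rule inj_onI)
    fix x y assume "x \<in> S" "y \<in> S" "vadd x a = vadd y a"
    moreover have "length x = length a" "length y = length a"
      using \<open>x \<in> S\<close> \<open>y \<in> S\<close> assms by (auto simp: F2n_def)
    ultimately show "x = y"
      by (metis vadd_vadd_cancel_right)
  qed
  then show ?thesis
    by (simp add: translate_def card_image)
qed

text \<open>\<open>y \<in> S + a \<longleftrightarrow> a \<in> S + y\<close>, since both say \<open>y + a \<in> S\<close>.\<close>
lemma translates_containing:
  assumes "S \<subseteq> F2n n" "y \<in> F2n n"
  shows "{a \<in> F2n n. y \<in> translate S a} = translate S y"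
proof -
  have "y \<in> translate S a \<longleftrightarrow> a \<in> translate S y" if "a \<in> F2n n" for a
  proof -
    have "y = vadd x a \<longleftrightarrow> a = vadd x y" if "x \<in> S" for x
    proof -
      have "length x = length a" "length x = length y"
        using \<open>x \<in> S\<close> \<open>a \<in> F2n n\<close> assms by (auto simp: F2n_def)
      then show ?thesis
        by (metis vadd_vadd_cancel_left)
    qed
    then show ?thesis
      unfolding translate_def by blast
  qed
  then show ?thesis
    using translate_subset_F2n[OF assms] by blast
qed

lemma sum_card_Int_translate:
  assumes "S \<subseteq> F2n n" "T \<subseteq> F2n n"
  shows "(\<Sum>a\<in>F2n n. card (T \<inter> translate S a)) = card S * card T"
proof -
  have "finite T"
    using assms(2) finite_F2n finite_subset by blast
  have "(\<Sum>a\<in>F2n n. card {y \<in> T. y \<in> translate S a}) = card S * card T"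
    using assms by (intro sum_multicount finite_F2n \<open>finite T\<close>)
      (auto simp: translates_containing card_translate)
  then show ?thesis
    by (simp add: Int_def)
qed

lemma ex_translate_meeting_average:
  assumes "S \<subseteq> F2n n" "T \<subseteq> F2n n"
  shows "\<exists>a\<in>F2n n. card S * card T \<le> 2 ^ n * card (T \<inter> translate S a)"
proof -
  have "F2n n \<noteq> {}"
    using card_F2n[of n] by auto
  then show ?thesis
    using ex_ge_average[OF finite_F2n, of n "\<lambda>a. card (T \<inter> translate S a)"]
    by (simp add: sum_card_Int_translate[OF assms] card_F2n)
qed

lemma is_chain_subset: "is_chain D \<Longrightarrow> C \<subseteq> D \<Longrightarrow> is_chain C"
  by (auto simp: is_chain_def)

definition staircase :: "nat \<Rightarrow> nat \<Rightarrow> bool list" where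
  "staircase n k = replicate k True @ replicate (n - k) False"

definition staircase_chain :: "nat \<Rightarrow> bool list set" where
  "staircase_chain n = staircase n ` {..n}"

lemma vle_staircase_iff:
  assumes "k \<le> n" "l \<le> n"
  shows "vle (staircase n k) (staircase n l) \<longleftrightarrow> k \<le> l"
proof
  assume le: "vle (staircase n k) (staircase n l)"
  show "k \<le> l"
  proof (rule ccontr)
    assume "\<not> k \<le> l"
    then have "staircase n k ! l" "\<not> staircase n l ! l"
      using assms by (auto simp: staircase_def nth_append)
    with le show False
      using \<open>\<not> k \<le> l\<close> assms by (auto simp: vle_def staircase_def)
  qed
qed (use assms in \<open>auto simp: vle_def staircase_def nth_append\<close>)

lemma staircase_chain_subset_F2n: "staircase_chain n \<subseteq> F2n n"
  by (auto simp: staircase_chain_def staircase_def F2n_def)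

lemma is_chain_staircase_chain: "is_chain (staircase_chain n)"
  by (auto simp: is_chain_def staircase_chain_def vle_staircase_iff)

lemma card_staircase_chain: "card (staircase_chain n) = n + 1"
proof -
  have "inj_on (staircase n) {..n}"
  proof (rule inj_onI)
    fix k l assume "k \<in> {..n}" "l \<in> {..n}" "staircase n k = staircase n l"
    then have "vle (staircase n k) (staircase n l)" "vle (staircase n l) (staircase n k)"
      by (simp_all add: vle_def)
    with \<open>k \<in> {..n}\<close> \<open>l \<in> {..n}\<close> show "k = l"
      by (simp add: vle_staircase_iff)
  qed
  then show ?thesis
    by (simp add: staircase_chain_def card_image)
qed

theorem lemma4p3:
  fixes n :: nat and \<alpha> :: real and S :: "bool list set"
  assumes "0 \<le> \<alpha>" and "\<alpha> \<le> 1"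
    and "S \<subseteq> F2n n"
    and "real (card S) \<ge> \<alpha> * 2 ^ n"
  shows "\<exists>a \<in> F2n n. \<exists>C. C \<subseteq> translate S a \<and> is_chain C \<and> real (card C) \<ge> \<alpha> * real n"
proof -
  obtain a where a: "a \<in> F2n n"
    and avg: "card S * (n + 1) \<le> 2 ^ n * card (staircase_chain n \<inter> translate S a)"
    using ex_translate_meeting_average[OF assms(3) staircase_chain_subset_F2n]
    by (auto simp: card_staircase_chain)
  define C where "C = staircase_chain n \<inter> translate S a"
  have "2 ^ n * (\<alpha> * real n) \<le> 2 ^ n * (\<alpha> * (real n + 1))"
    using assms(1) by (simp add: mult_left_mono)
  also have "\<dots> \<le> real (card S) * (real n + 1)"
    using mult_right_mono[OF assms(4), of "real n + 1"] by (simp add: algebra_simps)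
  also have "\<dots> \<le> 2 ^ n * real (card C)"
    using of_nat_mono[OF avg[folded C_def], where 'a = real] by (simp add: algebra_simps)
  finally have "\<alpha> * real n \<le> real (card C)"
    by simp
  moreover have "is_chain C"
    using is_chain_staircase_chain[of n] by (rule is_chain_subset) (simp add: C_def)
  moreover have "C \<subseteq> translate S a"
    by (simp add: C_def)
  ultimately show ?thesis
    using a by blast
qed

end
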